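(* Let $g(x_1,\ldots,x_n)=\prod_{j\in\mathcal{J}}\phi_j(x_i:i\in\alpha_j)$ be a global function on a product of finite alphabets with nonnegative local functions, and run the support passing algorithm on its factor graph, initialized by $\lambda(\mu^1_{X\to\phi})=\lambda(\nu^1_{\phi\to X})=\mathcal{X}$ for every variable node $X$ and adjacent factor node $\phi$, where $\mathcal{X}$ is the alphabet of $X$. Then: (1) for all $k$, $\lambda(\mu^{k+1}_{X\to\phi})\subseteq\lambda(\mu^k_{X\to\phi})$ and $\lambda(\nu^{k+1}_{\phi\to X})\subseteq\lambda(\nu^k_{\phi\to X})$; hence after finitely many iterations the supports of all messages remain unchanged; (2) for every variable node $X$ (with value $x$), every adjacent factor node $\phi$ and every $k$, the support of the marginal $x\mapsto\sum_{\text{all variables other than } x}g(x_1,\ldots,x_n)$ is a subset of both $\lambda(\mu^k_{X\to\phi})$ and $\lambda(\nu^k_{\phi\to X})$.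
   Context: Factor graph: for $g=\prod_{j}\phi_j(x_i:i\in\alpha_j)$, the bipartite graph with variable nodes $X_1,\ldots,X_n$, factor nodes $\phi_j$, and an edge $(X_i,\phi_j)$ whenever $x_i\in\alpha_j$; $n(v)$ denotes the set of neighbours of a node $v$. For a function $h$, $\lambda(h)=\{x:h(x)\neq0\}$, and for $h(x,y)$ with $y$ fixed, $\lambda(h(x\mid y))=\{x:h(x,y)\neq0\}$. The support passing algorithm passes sets (supports) $\lambda(\mu^k_{X\to\phi})\subseteq\mathcal{X}$ from variable nodes to factor nodes and $\lambda(\nu^k_{\phi\to X})\subseteq\mathcal{X}$ from factor nodes to variable nodes, updated by $\lambda(\mu^{k+1}_{X\to\phi})=\bigcap_{\psi\in n(X)\setminus\{\phi\}}\lambda(\nu^k_{\psi\to X})$ (empty intersection $=\mathcal{X}$) and $\lambda(\nu^{k+1}_{\phi\to X})=\bigcup\lambda\big(\phi(x\mid x^*:X^*\in n(\phi)\setminus\{X\})\big)$, the union being over all assignments with $x^*\in\lambda(\mu^k_{X^*\to\phi})$ for each $X^*\in n(\phi)\setminus\{X\}$. *)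

theory Defs
  imports Complex_Main "HOL-Library.FuncSet"
begin

text \<open>Factor graph: variable nodes are elements of 'v, factor nodes are elements of 'j,
  alpha j is the scope of factor j, and variable v is adjacent to factor j iff v \<in> alpha j.
  A v is the (finite) alphabet of variable v; phi j is the local function (a function of a
  full assignment that depends only on the coordinates in alpha j).\<close>

text \<open>One step of the support passing algorithm. mu v j is the support of the message
  from variable v to factor j, nu j v the support of the message from factor j to variable v.\<close>

definition sp_mu_step ::
  "('v \<Rightarrow> 'a set) \<Rightarrow> ('j \<Rightarrow> 'v set) \<Rightarrow> ('j \<Rightarrow> 'v \<Rightarrow> 'a set) \<Rightarrow> 'v \<Rightarrow> 'j \<Rightarrow> 'a set" where
  "sp_mu_step A alpha nu v j =
     {a \<in> A v. \<forall>j'. v \<in> alpha j' \<and> j' \<noteq> j \<longrightarrow> a \<in> nu j' v}"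

definition sp_nu_step ::
  "('v \<Rightarrow> 'a set) \<Rightarrow> ('j \<Rightarrow> 'v set) \<Rightarrow> ('j \<Rightarrow> ('v \<Rightarrow> 'a) \<Rightarrow> real)
     \<Rightarrow> ('v \<Rightarrow> 'j \<Rightarrow> 'a set) \<Rightarrow> 'j \<Rightarrow> 'v \<Rightarrow> 'a set" where
  "sp_nu_step A alpha phi mu j v =
     (\<Union>y \<in> {y. \<forall>w \<in> alpha j - {v}. y w \<in> mu w j}.
        {a \<in> A v. phi j (y(v := a)) \<noteq> 0})"

text \<open>Iterates, indexed as in the paper: iteration 1 is the initialization (all supports are
  the full alphabets); index 0 is a dummy equal to iteration 1.\<close>

fun sp_iter ::
  "('v \<Rightarrow> 'a set) \<Rightarrow> ('j \<Rightarrow> 'v set) \<Rightarrow> ('j \<Rightarrow> ('v \<Rightarrow> 'a) \<Rightarrow> real) \<Rightarrow> nat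
     \<Rightarrow> ('v \<Rightarrow> 'j \<Rightarrow> 'a set) \<times> ('j \<Rightarrow> 'v \<Rightarrow> 'a set)" where
  "sp_iter A alpha phi 0 = ((\<lambda>v j. A v), (\<lambda>j v. A v))"
| "sp_iter A alpha phi (Suc 0) = ((\<lambda>v j. A v), (\<lambda>j v. A v))"
| "sp_iter A alpha phi (Suc (Suc k)) =
     (let (mu, nu) = sp_iter A alpha phi (Suc k)
      in (sp_mu_step A alpha nu, sp_nu_step A alpha phi mu))"

definition sp_mu where "sp_mu A alpha phi k = fst (sp_iter A alpha phi k)"
definition sp_nu where "sp_nu A alpha phi k = snd (sp_iter A alpha phi k)"

definition global_fn :: "('j::finite \<Rightarrow> ('v \<Rightarrow> 'a) \<Rightarrow> real) \<Rightarrow> ('v \<Rightarrow> 'a) \<Rightarrow> real" where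
  "global_fn phi x = (\<Prod>j\<in>UNIV. phi j x)"

definition marginal ::
  "('v \<Rightarrow> 'a set) \<Rightarrow> ('j::finite \<Rightarrow> ('v \<Rightarrow> 'a) \<Rightarrow> real) \<Rightarrow> 'v \<Rightarrow> 'a \<Rightarrow> real" where
  "marginal A phi v a = (\<Sum>x \<in> {x \<in> PiE UNIV A. x v = a}. global_fn phi x)"

definition support :: "('b \<Rightarrow> real) \<Rightarrow> 'b set \<Rightarrow> 'b set" where
  "support h S = {s \<in> S. h s \<noteq> 0}"

end

theory Submission
  imports Defs "HOL-Library.Product_Order"
begin

text \<open>Both update rules are monotone in the incoming supports and the initial supports are the
  full alphabets, so by induction every message support can only shrink; as all supports live in
  a finite lattice, each sequence of supports becomes constant. A configuration x with
  \<open>g x \<noteq> 0\<close> makes every local function nonzero, so each coordinate value of x survives every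
  update: x itself witnesses the union in the factor-to-variable rule. A value in the support of
  the marginal of X is the X-coordinate of such a configuration.\<close>

lemma sp_mu_Suc_Suc:
  "sp_mu A alpha phi (Suc (Suc k)) = sp_mu_step A alpha (sp_nu A alpha phi (Suc k))"
  by (simp add: sp_mu_def sp_nu_def split: prod.split)

lemma sp_nu_Suc_Suc:
  "sp_nu A alpha phi (Suc (Suc k)) = sp_nu_step A alpha phi (sp_mu A alpha phi (Suc k))"
  by (simp add: sp_mu_def sp_nu_def split: prod.split)

lemma sp_mu_1: "sp_mu A alpha phi (Suc 0) = (\<lambda>v j. A v)"
  and sp_nu_1: "sp_nu A alpha phi (Suc 0) = (\<lambda>j v. A v)"
  by (simp_all add: sp_mu_def sp_nu_def)

lemma sp_mu_step_subset_alphabet: "sp_mu_step A alpha nu v j \<subseteq> A v"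
  and sp_nu_step_subset_alphabet: "sp_nu_step A alpha phi mu j v \<subseteq> A v"
  by (auto simp: sp_mu_step_def sp_nu_step_def)

lemma sp_mu_step_mono: "nu' \<le> nu \<Longrightarrow> sp_mu_step A alpha nu' \<le> sp_mu_step A alpha nu"
  by (fastforce simp: le_fun_def sp_mu_step_def)

lemma sp_nu_step_mono: "mu' \<le> mu \<Longrightarrow> sp_nu_step A alpha phi mu' \<le> sp_nu_step A alpha phi mu"
  by (fastforce simp: le_fun_def sp_nu_step_def)

lemma sp_mu_subset_alphabet: "sp_mu A alpha phi k v j \<subseteq> A v"
proof (cases k)
  case (Suc m)
  then show ?thesis
    by (cases m) (simp_all add: sp_mu_1 sp_mu_Suc_Suc sp_mu_step_subset_alphabet)
qed (simp add: sp_mu_def)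

lemma sp_nu_subset_alphabet: "sp_nu A alpha phi k j v \<subseteq> A v"
proof (cases k)
  case (Suc m)
  then show ?thesis
    by (cases m) (simp_all add: sp_nu_1 sp_nu_Suc_Suc sp_nu_step_subset_alphabet)
qed (simp add: sp_nu_def)

lemma sp_iter_Suc_antimono:
  "sp_mu A alpha phi (Suc (Suc k)) \<le> sp_mu A alpha phi (Suc k) \<and>
   sp_nu A alpha phi (Suc (Suc k)) \<le> sp_nu A alpha phi (Suc k)"
proof (induction k)
  case 0
  show ?case
    by (simp add: sp_mu_Suc_Suc sp_nu_Suc_Suc sp_mu_1 sp_nu_1 le_fun_def
        sp_mu_step_subset_alphabet sp_nu_step_subset_alphabet)
next
  case (Suc k)
  then show ?case
    unfolding sp_mu_Suc_Suc[of A alpha phi "Suc k"] sp_nu_Suc_Suc[of A alpha phi "Suc k"]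
    by (simp add: sp_mu_Suc_Suc sp_nu_Suc_Suc sp_mu_step_mono sp_nu_step_mono)
qed

lemma sp_iter_antimono:
  assumes "k \<ge> 1"
  shows "sp_mu A alpha phi (Suc k) v j \<subseteq> sp_mu A alpha phi k v j \<and>
    sp_nu A alpha phi (Suc k) j v \<subseteq> sp_nu A alpha phi k j v"
proof -
  obtain m where "k = Suc m"
    using assms by (cases k) auto
  then show ?thesis
    using sp_iter_Suc_antimono[of A alpha phi m] by (simp add: le_fun_def)
qed

lemma antimono_finite_range_eventually_const:
  fixes f :: "nat \<Rightarrow> 'a::order"
  assumes "antimono f" and "finite (range f)"
  shows "\<exists>N. \<forall>n \<ge> N. f n = f N"
proof -
  obtain N where min: "\<forall>b \<in> range f. b \<le> f N \<longrightarrow> f N = b"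
    using finite_has_minimal[OF assms(2)] by blast
  have "f n = f N" if "n \<ge> N" for n
    using min antimonoD[OF assms(1) that] by auto
  then show ?thesis by blast
qed

lemma eventually_const_shift_Suc:
  assumes "\<forall>n \<ge> N. f (Suc n) = f (Suc N)"
  shows "\<exists>K \<ge> 1. \<forall>k \<ge> K. f k = f K"
proof (intro exI[of _ "Suc N"] conjI allI impI)
  fix k assume "Suc N \<le> k"
  then obtain n where "k = Suc n" "n \<ge> N"
    by (cases k) auto
  then show "f k = f (Suc N)"
    using assms by blast
qed simp

lemma finite_bounded_set_valued_functions:
  fixes B :: "'x::finite \<Rightarrow> 'y::finite \<Rightarrow> 'a set"
  assumes "\<And>x y. finite (B x y)"
  shows "finite {f. \<forall>x y. f x y \<subseteq> B x y}"
proof -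
  have "{f. \<forall>x y. f x y \<subseteq> B x y} = PiE UNIV (\<lambda>x. PiE UNIV (\<lambda>y. Pow (B x y)))"
    by (auto simp: PiE_UNIV_domain)
  then show ?thesis
    using assms by (simp add: finite_PiE)
qed

lemma nonzero_config_in_supports:
  assumes "\<And>v. x v \<in> A v" and "\<And>j. phi j x \<noteq> 0"
  shows "x v \<in> sp_mu A alpha phi (Suc k) v j \<and> x v \<in> sp_nu A alpha phi (Suc k) j v"
proof (induction k arbitrary: v j)
  case 0
  then show ?case using assms by (simp add: sp_mu_1 sp_nu_1)
next
  case (Suc k)
  have "x v \<in> sp_mu A alpha phi (Suc (Suc k)) v j"
    using Suc assms by (auto simp: sp_mu_Suc_Suc sp_mu_step_def)
  moreover have "x v \<in> sp_nu A alpha phi (Suc (Suc k)) j v"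
    unfolding sp_nu_Suc_Suc sp_nu_step_def
    using Suc assms by (intro UN_I[of x]) auto
  ultimately show ?case by blast
qed

lemma marginal_nonzero_obtains_config:
  assumes "marginal A phi v a \<noteq> 0"
  obtains x where "x \<in> PiE UNIV A" "x v = a" "\<And>j. phi j x \<noteq> 0"
proof -
  obtain x where "x \<in> PiE UNIV A" "x v = a" "global_fn phi x \<noteq> 0"
    using assms unfolding marginal_def by (metis (mono_tags, lifting) mem_Collect_eq sum.neutral)
  then show ?thesis
    using that by (auto simp: global_fn_def)
qed

lemma marginal_support_subset_supports:
  assumes "k \<ge> 1"
  shows "support (marginal A phi v) (A v) \<subseteq> sp_mu A alpha phi k v j \<and>
    support (marginal A phi v) (A v) \<subseteq> sp_nu A alpha phi k j v"
proof (intro conjI subsetI)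
  fix a assume "a \<in> support (marginal A phi v) (A v)"
  then obtain x where "x \<in> PiE UNIV A" "x v = a" "\<And>j. phi j x \<noteq> 0"
    by (auto simp: support_def elim: marginal_nonzero_obtains_config)
  moreover obtain m where "k = Suc m"
    using assms by (cases k) auto
  ultimately show "a \<in> sp_mu A alpha phi k v j" "a \<in> sp_nu A alpha phi k j v"
    using nonzero_config_in_supports[of x A phi v alpha m j] by auto
qed

lemma sp_iter_eventually_const:
  fixes A :: "'v::finite \<Rightarrow> 'a set" and alpha :: "'j::finite \<Rightarrow> 'v set"
  assumes "\<And>v. finite (A v)"
  shows "\<exists>K \<ge> 1. \<forall>k \<ge> K. sp_mu A alpha phi k = sp_mu A alpha phi K \<and>
                            sp_nu A alpha phi k = sp_nu A alpha phi K"
proof -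
  define f where "f k = (sp_mu A alpha phi k, sp_nu A alpha phi k)" for k
  have "antimono (\<lambda>k. f (Suc k))"
    using sp_iter_Suc_antimono by (intro decseq_SucI) (simp add: f_def less_eq_prod_def)
  define S where "S = {g :: 'v \<Rightarrow> 'j \<Rightarrow> 'a set. \<forall>v j. g v j \<subseteq> A v} \<times>
                      {g :: 'j \<Rightarrow> 'v \<Rightarrow> 'a set. \<forall>j v. g j v \<subseteq> A v}"
  have "finite S"
    unfolding S_def using finite_bounded_set_valued_functions[of "\<lambda>v (j::'j). A v", OF assms]
      finite_bounded_set_valued_functions[of "\<lambda>(j::'j) v. A v", OF assms]
    by (rule finite_cartesian_product)
  moreover have "range (\<lambda>k. f (Suc k)) \<subseteq> S"
    by (auto simp: S_def f_def dest: sp_mu_subset_alphabet[THEN subsetD] sp_nu_subset_alphabet[THEN subsetD])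
  ultimately have "finite (range (\<lambda>k. f (Suc k)))"
    by (rule finite_subset[rotated])
  with \<open>antimono (\<lambda>k. f (Suc k))\<close> obtain N where "\<forall>n \<ge> N. f (Suc n) = f (Suc N)"
    using antimono_finite_range_eventually_const by blast
  then have "\<exists>K \<ge> 1. \<forall>k \<ge> K. f k = f K"
    by (rule eventually_const_shift_Suc)
  then show ?thesis
    by (simp add: f_def)
qed

theorem mainTheorem2:
  fixes A :: "'v::finite \<Rightarrow> 'a set"
    and alpha :: "'j::finite \<Rightarrow> 'v set"
    and phi :: "'j \<Rightarrow> ('v \<Rightarrow> 'a) \<Rightarrow> real"
  assumes fin: "\<And>v. finite (A v)"
    and local: "\<And>j x y. (\<forall>w \<in> alpha j. x w = y w) \<Longrightarrow> phi j x = phi j y"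
    and nonneg: "\<And>j x. x \<in> PiE UNIV A \<Longrightarrow> phi j x \<ge> 0"
  shows "(\<forall>k \<ge> 1. \<forall>j v. v \<in> alpha j \<longrightarrow>
            sp_mu A alpha phi (Suc k) v j \<subseteq> sp_mu A alpha phi k v j \<and>
            sp_nu A alpha phi (Suc k) j v \<subseteq> sp_nu A alpha phi k j v)
       \<and> (\<exists>K \<ge> 1. \<forall>k \<ge> K. \<forall>j v. v \<in> alpha j \<longrightarrow>
            sp_mu A alpha phi k v j = sp_mu A alpha phi K v j \<and>
            sp_nu A alpha phi k j v = sp_nu A alpha phi K j v)
       \<and> (\<forall>k \<ge> 1. \<forall>j v. v \<in> alpha j \<longrightarrow>
            support (marginal A phi v) (A v) \<subseteq> sp_mu A alpha phi k v j \<and>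
            support (marginal A phi v) (A v) \<subseteq> sp_nu A alpha phi k j v)"
proof (intro conjI)
  show "\<forall>k \<ge> 1. \<forall>j v. v \<in> alpha j \<longrightarrow>
          sp_mu A alpha phi (Suc k) v j \<subseteq> sp_mu A alpha phi k v j \<and>
          sp_nu A alpha phi (Suc k) j v \<subseteq> sp_nu A alpha phi k j v"
    by (intro allI impI sp_iter_antimono)
  obtain K where "K \<ge> 1"
    and stable: "\<And>k. k \<ge> K \<Longrightarrow> sp_mu A alpha phi k = sp_mu A alpha phi K \<and>
                                sp_nu A alpha phi k = sp_nu A alpha phi K"
    using sp_iter_eventually_const[of A, OF fin] by blast
  then show "\<exists>K \<ge> 1. \<forall>k \<ge> K. \<forall>j v. v \<in> alpha j \<longrightarrow>
          sp_mu A alpha phi k v j = sp_mu A alpha phi K v j \<and>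
          sp_nu A alpha phi k j v = sp_nu A alpha phi K j v"
    by (intro exI[of _ K] conjI allI impI; use stable in metis)
  show "\<forall>k \<ge> 1. \<forall>j v. v \<in> alpha j \<longrightarrow>
          support (marginal A phi v) (A v) \<subseteq> sp_mu A alpha phi k v j \<and>
          support (marginal A phi v) (A v) \<subseteq> sp_nu A alpha phi k j v"
    by (intro allI impI marginal_support_subset_supports)
qed

end
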